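(* Let $\phi$ satisfy $\phi'(z)\in[\gamma,1]$ for all $z$ ($\gamma\in(0,1]$), let $C_R=10R^2\gamma^{-2}+10$, and suppose $\|x_i\|^2\ge5\gamma^{-2}C_Rn\max_{k\ne i}|\langle x_i,x_k\rangle|$ for all $i\in[n]$. Then for every $W\in\mathbb{R}^{m\times d}$, $$\|\nabla\hat L(W)\|_F\ge\frac{\gamma R_{\min}}{2\sqrt2R\sqrt n}\hat G(W).$$
   Context: Network $f(x;W)=\sum_{j=1}^ma_j\phi(\langle w_j,x\rangle)$, $a_j\in\{\pm1/\sqrt m\}$. Logistic loss $\ell(z)=\log(1+e^{-z})$, $\hat L(W)=\frac1n\sum_i\ell(y_if(x_i;W))$, $\hat G(W)=\frac1n\sum_i1/(1+e^{y_if(x_i;W)})$. $R_{\max}=\max_i\|x_i\|$, $R_{\min}=\min_i\|x_i\|>0$, $R=R_{\max}/R_{\min}$. *)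

theory Defs
  imports "HOL-Analysis.Analysis"
begin

definition logistic_loss :: "real \<Rightarrow> real" where
  "logistic_loss z = ln (1 + exp (- z))"

definition net :: "(real \<Rightarrow> real) \<Rightarrow> ('m::finite \<Rightarrow> real) \<Rightarrow> real^'d^'m \<Rightarrow> real^'d \<Rightarrow> real" where
  "net \<phi> a W x = (\<Sum>j\<in>UNIV. a j * \<phi> ((W $ j) \<bullet> x))"

definition emp_loss :: "(real \<Rightarrow> real) \<Rightarrow> ('m::finite \<Rightarrow> real) \<Rightarrow> nat \<Rightarrow> (nat \<Rightarrow> real^'d) \<Rightarrow> (nat \<Rightarrow> real) \<Rightarrow> real^'d^'m \<Rightarrow> real" where
  "emp_loss \<phi> a n x y W = (1 / real n) * (\<Sum>i<n. logistic_loss (y i * net \<phi> a W (x i)))"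

definition emp_G :: "(real \<Rightarrow> real) \<Rightarrow> ('m::finite \<Rightarrow> real) \<Rightarrow> nat \<Rightarrow> (nat \<Rightarrow> real^'d) \<Rightarrow> (nat \<Rightarrow> real) \<Rightarrow> real^'d^'m \<Rightarrow> real" where
  "emp_G \<phi> a n x y W = (1 / real n) * (\<Sum>i<n. 1 / (1 + exp (y i * net \<phi> a W (x i))))"

definition Rmax :: "nat \<Rightarrow> (nat \<Rightarrow> real^'d) \<Rightarrow> real" where
  "Rmax n x = Max ((\<lambda>i. norm (x i)) ` {..<n})"

definition Rmin :: "nat \<Rightarrow> (nat \<Rightarrow> real^'d) \<Rightarrow> real" where
  "Rmin n x = Min ((\<lambda>i. norm (x i)) ` {..<n})"

end

theory Submission
  imports Defs
begin

text \<open>The gradient of the empirical loss has rows \<open>\<Sum>\<^sub>i c\<^sub>j\<^sub>i x\<^sub>i\<close> with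
  \<open>|c\<^sub>j\<^sub>i| \<ge> \<gamma> g\<^sub>i / (n \<surd>m)\<close>, where \<open>g\<^sub>i = 1/(1 + exp (y\<^sub>i f(x\<^sub>i)))\<close>. The separation hypothesis makes the
  inputs so nearly orthogonal that the cross terms of \<open>\<parallel>\<Sum>\<^sub>i c\<^sub>i x\<^sub>i\<parallel>\<^sup>2\<close> cost at most half of the
  diagonal \<open>\<Sum>\<^sub>i c\<^sub>i\<^sup>2 \<parallel>x\<^sub>i\<parallel>\<^sup>2\<close>. Summing over the \<open>m\<close> rows and applying Cauchy-Schwarz to
  \<open>\<Sum>\<^sub>i g\<^sub>i = n \<hat>G\<close> gives \<open>\<parallel>\<nabla>\<hat>L\<parallel>\<^sup>2 \<ge> \<gamma>\<^sup>2 R\<^sub>m\<^sub>i\<^sub>n\<^sup>2 \<hat>G\<^sup>2 / (2n)\<close>, which is stronger than claimed.\<close>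

lemma inner_scaled_ge_of_small_inner:
  fixes v w :: "'a::real_inner" and c d N :: real
  assumes N: "N > 0"
    and v: "\<bar>v \<bullet> w\<bar> * N \<le> (norm v)\<^sup>2" and w: "\<bar>v \<bullet> w\<bar> * N \<le> (norm w)\<^sup>2"
  shows "- ((c\<^sup>2 * (norm v)\<^sup>2 + d\<^sup>2 * (norm w)\<^sup>2) / (2 * N)) \<le> c * d * (v \<bullet> w)"
proof -
  define t where "t = \<bar>v \<bullet> w\<bar>"
  have "2 * (\<bar>c\<bar> * \<bar>d\<bar> * t) \<le> (c\<^sup>2 + d\<^sup>2) * t"
  proof -
    have "0 \<le> (\<bar>c\<bar> - \<bar>d\<bar>)\<^sup>2 * t" unfolding t_def by simp
    then show ?thesis by (simp add: power2_eq_square algebra_simps)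
  qed
  also have "\<dots> = (c\<^sup>2 * (t * N) + d\<^sup>2 * (t * N)) / N"
    using N by (simp add: field_simps)
  also have "\<dots> \<le> (c\<^sup>2 * (norm v)\<^sup>2 + d\<^sup>2 * (norm w)\<^sup>2) / N"
    using N v w unfolding t_def by (intro divide_right_mono add_mono mult_left_mono) auto
  finally have "\<bar>c\<bar> * \<bar>d\<bar> * t \<le> (c\<^sup>2 * (norm v)\<^sup>2 + d\<^sup>2 * (norm w)\<^sup>2) / (2 * N)"
    by (simp add: field_simps)
  moreover have "- (\<bar>c\<bar> * \<bar>d\<bar> * t) \<le> c * d * (v \<bullet> w)"
    unfolding t_def by (simp add: abs_mult[symmetric] abs_le_iff)
  ultimately show ?thesis by linarith
qed

lemma norm_sum_scaleR_sq_ge_of_near_orthogonal: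
  fixes v :: "nat \<Rightarrow> 'a::real_inner" and c :: "nat \<Rightarrow> real" and K :: real
  assumes K: "K \<ge> 2" and n: "n \<ge> 1"
    and near_orth: "\<And>i k. i < n \<Longrightarrow> k < n \<Longrightarrow> k \<noteq> i \<Longrightarrow> \<bar>v i \<bullet> v k\<bar> * (K * real n) \<le> (norm (v i))\<^sup>2"
  shows "(\<Sum>i<n. (c i)\<^sup>2 * (norm (v i))\<^sup>2) / 2 \<le> (norm (\<Sum>i<n. c i *\<^sub>R v i))\<^sup>2"
proof -
  define A where "A i = (c i)\<^sup>2 * (norm (v i))\<^sup>2" for i
  define N where "N = K * real n"
  \<comment> \<open>Each cross term is charged to the two diagonal terms it involves; in total this costs
      \<open>2n \<Sum>\<^sub>i A\<^sub>i / (2N) = \<Sum>\<^sub>i A\<^sub>i / K\<close>.\<close>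
  define b where "b i k = (if i = k then A i else - ((A i + A k) / (2 * N)))" for i k
  have N: "N > 0" unfolding N_def using K n by simp
  have A0: "A i \<ge> 0" for i unfolding A_def by simp
  have b_le: "b i k \<le> c i * c k * (v i \<bullet> v k)" if "i < n" "k < n" for i k
  proof (cases "i = k")
    case True
    then show ?thesis unfolding b_def A_def power2_norm_eq_inner by (simp add: power2_eq_square)
  next
    case False
    have "\<bar>v i \<bullet> v k\<bar> * N \<le> (norm (v k))\<^sup>2"
      using near_orth[OF that(2,1) False] unfolding N_def by (simp add: inner_commute)
    with False near_orth[OF that False[symmetric]] show ?thesis
      unfolding b_def A_def N_def by (simp add: inner_scaled_ge_of_small_inner N[unfolded N_def])
  qed
  have "(\<Sum>i<n. \<Sum>k<n. b i k) \<ge> (\<Sum>i<n. A i) - (\<Sum>i<n. \<Sum>k<n. A i + A k) / (2 * N)"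
  proof -
    have "b i k \<ge> (if i = k then A i else 0) - (A i + A k) / (2 * N)" for i k
      using A0[of i] N unfolding b_def by auto
    then have "(\<Sum>i<n. \<Sum>k<n. b i k) \<ge> (\<Sum>i<n. \<Sum>k<n. (if i = k then A i else 0) - (A i + A k) / (2 * N))"
      by (intro sum_mono) auto
    then show ?thesis by (simp add: sum_subtractf sum_divide_distrib[symmetric])
  qed
  also have "(\<Sum>i<n. \<Sum>k<n. A i + A k) = 2 * real n * (\<Sum>i<n. A i)"
    by (simp add: sum.distrib sum_distrib_left[symmetric] sum.swap[of "\<lambda>i k. A k"])
  finally have "(\<Sum>i<n. A i) * (1 - 1 / K) \<le> (\<Sum>i<n. \<Sum>k<n. b i k)"
    using K n unfolding N_def by (simp add: field_simps)
  moreover have "(\<Sum>i<n. A i) / 2 \<le> (\<Sum>i<n. A i) * (1 - 1 / K)"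
  proof -
    have "1 / 2 \<le> 1 - 1 / K" using K by (simp add: field_simps)
    then show ?thesis using mult_left_mono[of "1 / 2" "1 - 1 / K" "\<Sum>i<n. A i"] A0
      by (simp add: sum_nonneg)
  qed
  moreover have "(\<Sum>i<n. \<Sum>k<n. b i k) \<le> (\<Sum>i<n. \<Sum>k<n. c i * c k * (v i \<bullet> v k))"
    by (intro sum_mono b_le) auto
  moreover have "(\<Sum>i<n. \<Sum>k<n. c i * c k * (v i \<bullet> v k)) = (norm (\<Sum>i<n. c i *\<^sub>R v i))\<^sup>2"
    by (simp add: power2_norm_eq_inner inner_sum_left inner_sum_right sum_distrib_left
        mult_ac inner_commute)
  ultimately show ?thesis unfolding A_def by linarith
qed

lemma logistic_loss_has_real_derivative:
  "(logistic_loss has_real_derivative - 1 / (1 + exp z)) (at z)"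
proof -
  have "((\<lambda>z. ln (1 + exp (- z))) has_real_derivative 1 / (1 + exp (- z)) * (exp (- z) * - 1)) (at z)"
    by (auto intro!: derivative_eq_intros simp: add_pos_pos)
  moreover have "1 / (1 + exp (- z)) * (exp (- z) * - 1) = - 1 / (1 + exp z)"
    by (simp add: field_simps exp_minus add_pos_pos)
  ultimately show ?thesis unfolding logistic_loss_def[abs_def] by simp
qed

lemma net_has_derivative:
  fixes a :: "'m::finite \<Rightarrow> real" and W :: "real^'d^'m"
  assumes "\<And>z. (\<phi> has_real_derivative \<phi>' z) (at z)"
  shows "((\<lambda>W. net \<phi> a W v) has_derivative
           (\<lambda>H. \<Sum>j\<in>UNIV. a j * ((H $ j) \<bullet> v * \<phi>' ((W $ j) \<bullet> v)))) (at W)"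
proof -
  have "bounded_linear (\<lambda>W::real^'d^'m. (W $ j) \<bullet> v)" for j
    using bounded_linear_compose[OF bounded_linear_inner_left bounded_linear_vec_nth] by blast
  then have "((\<lambda>W::real^'d^'m. (W $ j) \<bullet> v) has_derivative (\<lambda>H. (H $ j) \<bullet> v)) (at W)" for j
    by (rule bounded_linear_imp_has_derivative)
  then show ?thesis
    unfolding net_def
    by (intro has_derivative_sum has_derivative_mult_right DERIV_compose_FDERIV[OF assms])
qed

text \<open>The summand of \<open>\<hat>G\<close> is \<open>-\<ell>'(y\<^sub>i f(x\<^sub>i))\<close>; it weights sample \<open>i\<close> in the gradient.\<close>

definition sample_weight ::
    "(real \<Rightarrow> real) \<Rightarrow> ('m::finite \<Rightarrow> real) \<Rightarrow> (nat \<Rightarrow> real^'d) \<Rightarrow> (nat \<Rightarrow> real) \<Rightarrow> real^'d^'m \<Rightarrow> nat \<Rightarrow> real"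
  where "sample_weight \<phi> a x y W i = 1 / (1 + exp (y i * net \<phi> a W (x i)))"

definition loss_grad ::
    "(real \<Rightarrow> real) \<Rightarrow> (real \<Rightarrow> real) \<Rightarrow> ('m::finite \<Rightarrow> real) \<Rightarrow> nat \<Rightarrow> (nat \<Rightarrow> real^'d) \<Rightarrow> (nat \<Rightarrow> real)
      \<Rightarrow> real^'d^'m \<Rightarrow> real^'d^'m"
  where "loss_grad \<phi> \<phi>' a n x y W =
    (\<chi> j. \<Sum>i<n. (- sample_weight \<phi> a x y W i * y i * a j * \<phi>' ((W $ j) \<bullet> x i) / real n) *\<^sub>R x i)"

lemma emp_G_eq_sample_weight: "emp_G \<phi> a n x y W = (\<Sum>i<n. sample_weight \<phi> a x y W i) / real n"
  unfolding emp_G_def sample_weight_def by simp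

lemma sample_weight_pos: "sample_weight \<phi> a x y W i > 0"
  unfolding sample_weight_def by (simp add: add_pos_pos)

lemma emp_loss_has_derivative:
  fixes a :: "'m::finite \<Rightarrow> real" and W :: "real^'d^'m"
  assumes "\<And>z. (\<phi> has_real_derivative \<phi>' z) (at z)"
  shows "(emp_loss \<phi> a n x y has_derivative (\<lambda>H. loss_grad \<phi> \<phi>' a n x y W \<bullet> H)) (at W)"
proof -
  let ?g = "sample_weight \<phi> a x y W"
  have "(emp_loss \<phi> a n x y has_derivative
     (\<lambda>H. 1 / real n * (\<Sum>i<n. y i * (\<Sum>j\<in>UNIV. a j * ((H $ j) \<bullet> x i * \<phi>' ((W $ j) \<bullet> x i)))
        * (- 1 / (1 + exp (y i * net \<phi> a W (x i))))))) (at W)"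
    unfolding emp_loss_def[abs_def]
    by (intro has_derivative_mult_right has_derivative_sum
        DERIV_compose_FDERIV[OF logistic_loss_has_real_derivative] net_has_derivative assms)
  moreover have "1 / real n * (\<Sum>i<n. y i * (\<Sum>j\<in>UNIV. a j * ((H $ j) \<bullet> x i * \<phi>' ((W $ j) \<bullet> x i)))
        * (- 1 / (1 + exp (y i * net \<phi> a W (x i))))) = loss_grad \<phi> \<phi>' a n x y W \<bullet> H"
    for H :: "real^'d^'m"
  proof -
    have "loss_grad \<phi> \<phi>' a n x y W \<bullet> H = (\<Sum>j\<in>UNIV. loss_grad \<phi> \<phi>' a n x y W $ j \<bullet> H $ j)"
      by (rule inner_vec_def)
    also have "\<dots> = (\<Sum>j\<in>UNIV. \<Sum>i<n. - ?g i * y i * a j * \<phi>' ((W $ j) \<bullet> x i) / real n * (x i \<bullet> H $ j))"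
      unfolding loss_grad_def by (simp add: inner_sum_left)
    also have "\<dots> = (\<Sum>i<n. \<Sum>j\<in>UNIV. - ?g i * y i * a j * \<phi>' ((W $ j) \<bullet> x i) / real n * (x i \<bullet> H $ j))"
      by (rule sum.swap)
    finally show ?thesis
      unfolding sample_weight_def
      by (simp add: sum_distrib_left sum_distrib_right inner_commute mult_ac)
  qed
  ultimately show ?thesis by simp
qed

lemma norm_loss_grad_row_sq_ge:
  fixes a :: "'m::finite \<Rightarrow> real" and x :: "nat \<Rightarrow> real^'d" and K \<gamma> r :: real
  assumes dbound: "\<And>z. \<gamma> \<le> \<bar>\<phi>' z\<bar>" and "\<gamma> \<ge> 0"
    and a_sq: "(a j)\<^sup>2 = 1 / real CARD('m)"
    and labels: "\<And>i. i < n \<Longrightarrow> \<bar>y i\<bar> = 1"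
    and r: "\<And>i. i < n \<Longrightarrow> r \<le> norm (x i)" and "r \<ge> 0"
    and K: "K \<ge> 2" and n: "n \<ge> 1"
    and near_orth: "\<And>i k. i < n \<Longrightarrow> k < n \<Longrightarrow> k \<noteq> i \<Longrightarrow> \<bar>x i \<bullet> x k\<bar> * (K * real n) \<le> (norm (x i))\<^sup>2"
  shows "\<gamma>\<^sup>2 * r\<^sup>2 / (2 * real n ^ 2 * real CARD('m)) * (\<Sum>i<n. (sample_weight \<phi> a x y W i)\<^sup>2)
           \<le> (norm (loss_grad \<phi> \<phi>' a n x y W $ j))\<^sup>2"
proof -
  let ?g = "sample_weight \<phi> a x y W"
  define c where "c i = - ?g i * y i * a j * \<phi>' ((W $ j) \<bullet> x i) / real n" for i
  define s where "s = \<gamma>\<^sup>2 * r\<^sup>2 / (real n ^ 2 * real CARD('m))"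
  have coeff: "s * (?g i)\<^sup>2 \<le> (c i)\<^sup>2 * (norm (x i))\<^sup>2" if "i < n" for i
  proof -
    let ?d = "\<phi>' ((W $ j) \<bullet> x i)"
    have "(y i)\<^sup>2 = 1" using labels[OF that] by (metis power2_abs power_one)
    then have c_sq: "(c i)\<^sup>2 = (?g i)\<^sup>2 / (real n ^ 2 * real CARD('m)) * ?d\<^sup>2"
      unfolding c_def by (simp add: power_mult_distrib power_divide a_sq)
    have "\<gamma>\<^sup>2 * r\<^sup>2 \<le> ?d\<^sup>2 * (norm (x i))\<^sup>2"
    proof (rule mult_mono)
      show "\<gamma>\<^sup>2 \<le> ?d\<^sup>2"
        using power_mono[OF dbound \<open>\<gamma> \<ge> 0\<close>, of 2] by simp
      show "r\<^sup>2 \<le> (norm (x i))\<^sup>2"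
        using power_mono[OF r[OF that] \<open>r \<ge> 0\<close>, of 2] .
    qed simp_all
    then have "(?g i)\<^sup>2 / (real n ^ 2 * real CARD('m)) * (\<gamma>\<^sup>2 * r\<^sup>2)
        \<le> (?g i)\<^sup>2 / (real n ^ 2 * real CARD('m)) * (?d\<^sup>2 * (norm (x i))\<^sup>2)"
      by (rule mult_left_mono) simp
    then show ?thesis
      unfolding s_def c_sq by (simp add: mult_ac)
  qed
  have "s / 2 * (\<Sum>i<n. (?g i)\<^sup>2) \<le> (\<Sum>i<n. (c i)\<^sup>2 * (norm (x i))\<^sup>2) / 2"
    using sum_mono[of "{..<n}" "\<lambda>i. s * (?g i)\<^sup>2", OF coeff] by (simp add: sum_distrib_left[symmetric])
  also have "\<dots> \<le> (norm (\<Sum>i<n. c i *\<^sub>R x i))\<^sup>2"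
    by (rule norm_sum_scaleR_sq_ge_of_near_orthogonal[OF K n near_orth])
  also have "(\<Sum>i<n. c i *\<^sub>R x i) = loss_grad \<phi> \<phi>' a n x y W $ j"
    unfolding loss_grad_def c_def by simp
  finally show ?thesis unfolding s_def by simp
qed

lemma norm_loss_grad_ge:
  fixes a :: "'m::finite \<Rightarrow> real" and x :: "nat \<Rightarrow> real^'d" and K \<gamma> r :: real
  assumes dbound: "\<And>z. \<gamma> \<le> \<bar>\<phi>' z\<bar>" and "\<gamma> \<ge> 0"
    and a_sq: "\<And>j. (a j)\<^sup>2 = 1 / real CARD('m)"
    and labels: "\<And>i. i < n \<Longrightarrow> \<bar>y i\<bar> = 1"
    and r: "\<And>i. i < n \<Longrightarrow> r \<le> norm (x i)" and "r \<ge> 0"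
    and K: "K \<ge> 2" and n: "n \<ge> 1"
    and near_orth: "\<And>i k. i < n \<Longrightarrow> k < n \<Longrightarrow> k \<noteq> i \<Longrightarrow> \<bar>x i \<bullet> x k\<bar> * (K * real n) \<le> (norm (x i))\<^sup>2"
  shows "\<gamma> * r * emp_G \<phi> a n x y W / sqrt (2 * real n) \<le> norm (loss_grad \<phi> \<phi>' a n x y W)"
proof -
  let ?g = "sample_weight \<phi> a x y W"
  let ?G = "emp_G \<phi> a n x y W"
  have np: "real n > 0" using n by simp
  have "real n * ?G\<^sup>2 = (\<Sum>i<n. ?g i)\<^sup>2 / real n"
    using np by (simp add: emp_G_eq_sample_weight power2_eq_square)
  also have "\<dots> \<le> (\<Sum>i<n. (?g i)\<^sup>2)"
    using sum_squared_le_sum_of_squares[of ?g "{..<n}"] np by (simp add: field_simps)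
  finally have cauchy_schwarz: "real n * ?G\<^sup>2 \<le> (\<Sum>i<n. (?g i)\<^sup>2)" .
  have "(\<gamma> * r * ?G / sqrt (2 * real n))\<^sup>2 = \<gamma>\<^sup>2 * r\<^sup>2 * ?G\<^sup>2 / (2 * real n)"
    by (simp add: power_divide power_mult_distrib)
  also have "\<dots> = real CARD('m) * (\<gamma>\<^sup>2 * r\<^sup>2 / (2 * real n ^ 2 * real CARD('m)) * (real n * ?G\<^sup>2))"
    using np by (simp add: field_simps power2_eq_square)
  also have "\<dots> \<le> real CARD('m) * (\<gamma>\<^sup>2 * r\<^sup>2 / (2 * real n ^ 2 * real CARD('m)) * (\<Sum>i<n. (?g i)\<^sup>2))"
    by (intro mult_left_mono cauchy_schwarz) auto
  also have "\<dots> = (\<Sum>j\<in>(UNIV :: 'm set). \<gamma>\<^sup>2 * r\<^sup>2 / (2 * real n ^ 2 * real CARD('m)) * (\<Sum>i<n. (?g i)\<^sup>2))"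
    by simp
  also have "\<dots> \<le> (\<Sum>j\<in>UNIV. (norm (loss_grad \<phi> \<phi>' a n x y W $ j))\<^sup>2)"
    by (intro sum_mono norm_loss_grad_row_sq_ge[OF dbound \<open>\<gamma> \<ge> 0\<close> a_sq labels r \<open>r \<ge> 0\<close> K n near_orth])
  also have "\<dots> = (norm (loss_grad \<phi> \<phi>' a n x y W))\<^sup>2"
    unfolding power2_norm_eq_inner by (rule inner_vec_def[symmetric])
  finally show ?thesis by (rule power2_le_imp_le) simp
qed

lemma Rmin_le_norm_le_Rmax:
  assumes "i < n"
  shows "Rmin n x \<le> norm (x i)" and "norm (x i) \<le> Rmax n x"
  unfolding Rmin_def Rmax_def using assms by (auto intro: Min_le Max_ge)

lemma Rmax_div_Rmin_ge_one:
  assumes "n \<ge> 1" and "Rmin n x > 0"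
  shows "Rmax n x / Rmin n x \<ge> 1"
  using Rmin_le_norm_le_Rmax[of 0 n x] assms by simp

lemma emp_G_nonneg: "emp_G \<phi> a n x y W \<ge> 0"
  by (simp add: emp_G_eq_sample_weight sum_nonneg less_imp_le[OF sample_weight_pos])

lemma separation_constant_ge_two:
  fixes \<gamma> R :: real
  assumes "0 < \<gamma>" "\<gamma> \<le> 1"
  shows "5 * \<gamma> powr (-2) * (10 * R\<^sup>2 * \<gamma> powr (-2) + 10) \<ge> 2"
proof -
  have "\<gamma> powr (-2) \<ge> 1"
    using assms by (simp add: powr_minus powr_realpow power_le_one one_le_inverse)
  then have "5 * 1 * 10 \<le> 5 * \<gamma> powr (-2) * (10 * R\<^sup>2 * \<gamma> powr (-2) + 10)"
    by (intro mult_mono) auto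
  then show ?thesis by simp
qed

theorem mainTheorem14:
  fixes \<phi> \<phi>' :: "real \<Rightarrow> real" and \<gamma> :: real
    and a :: "'m::finite \<Rightarrow> real"
    and n :: nat and x :: "nat \<Rightarrow> real^'d" and y :: "nat \<Rightarrow> real"
    and W :: "real^'d^'m"
  assumes deriv: "\<And>z. (\<phi> has_real_derivative \<phi>' z) (at z)"
    and dbound: "\<And>z. \<gamma> \<le> \<phi>' z \<and> \<phi>' z \<le> 1"
    and gamma: "0 < \<gamma>" "\<gamma> \<le> 1"
    and a_def: "\<And>j. a j = 1 / sqrt (real CARD('m)) \<or> a j = - 1 / sqrt (real CARD('m))"
    and labels: "\<And>i. i < n \<Longrightarrow> y i = 1 \<or> y i = -1"
    and n_pos: "n \<ge> 1"
    and Rmin_pos: "Rmin n x > 0"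
    and sep: "\<And>i k. i < n \<Longrightarrow> k < n \<Longrightarrow> k \<noteq> i \<Longrightarrow>
       (norm (x i))\<^sup>2 \<ge> 5 * \<gamma> powr (-2) * (10 * (Rmax n x / Rmin n x)\<^sup>2 * \<gamma> powr (-2) + 10)
                          * real n * \<bar>x i \<bullet> x k\<bar>"
  shows "\<exists>G :: real^'d^'m. (emp_loss \<phi> a n x y has_derivative (\<lambda>H. G \<bullet> H)) (at W) \<and>
           norm G \<ge> \<gamma> * Rmin n x / (2 * sqrt 2 * (Rmax n x / Rmin n x) * sqrt (real n))
                       * emp_G \<phi> a n x y W"
proof (intro exI conjI)
  show "(emp_loss \<phi> a n x y has_derivative (\<lambda>H. loss_grad \<phi> \<phi>' a n x y W \<bullet> H)) (at W)"
    by (rule emp_loss_has_derivative[OF deriv])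
  define R where "R = Rmax n x / Rmin n x"
  have R: "R \<ge> 1" unfolding R_def by (rule Rmax_div_Rmin_ge_one[OF n_pos Rmin_pos])
  define t where "t = \<gamma> * Rmin n x * emp_G \<phi> a n x y W"
  have "t / sqrt (2 * real n) \<le> norm (loss_grad \<phi> \<phi>' a n x y W)"
    unfolding t_def
  proof (rule norm_loss_grad_ge[OF _ _ _ _ Rmin_le_norm_le_Rmax(1) _ separation_constant_ge_two[OF gamma] n_pos])
    show "\<bar>x i \<bullet> x k\<bar> * (5 * \<gamma> powr (-2) * (10 * R\<^sup>2 * \<gamma> powr (-2) + 10) * real n) \<le> (norm (x i))\<^sup>2"
      if "i < n" "k < n" "k \<noteq> i" for i k
      using sep[OF that] unfolding R_def by (simp add: mult_ac)
    show "\<gamma> \<le> \<bar>\<phi>' z\<bar>" for z using dbound[of z] by linarith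
    show "(a j)\<^sup>2 = 1 / real CARD('m)" for j using a_def[of j] by (auto simp: power_divide)
    show "\<bar>y i\<bar> = 1" if "i < n" for i using labels[OF that] by auto
  qed (use gamma Rmin_pos in auto)
  moreover have "t / (2 * sqrt 2 * R * sqrt (real n)) \<le> t / sqrt (2 * real n)"
  proof (rule divide_left_mono)
    show "sqrt (2 * real n) \<le> 2 * sqrt 2 * R * sqrt (real n)"
      using R mult_right_mono[of 1 "2 * R" "sqrt (real n)"] by (simp add: real_sqrt_mult)
    show "0 \<le> t" unfolding t_def using gamma Rmin_pos emp_G_nonneg[of \<phi> a n x y W] by simp
  qed (use n_pos R in auto)
  ultimately show "\<gamma> * Rmin n x / (2 * sqrt 2 * (Rmax n x / Rmin n x) * sqrt (real n)) * emp_G \<phi> a n x y W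
      \<le> norm (loss_grad \<phi> \<phi>' a n x y W)"
    unfolding R_def[symmetric] t_def by simp
qed

end
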